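(* Let $n>2k-t$, $q\geq 3$ and $k>2t+2$. Then \[\theta_{k+1}-\theta_{k-t}+\left[{n-t\atop k-t}\right]_q-q^{(k-t+1)(k-t)}\left[{n-k-1\atop k-t}\right]_q>\left[{n-t-2\atop k-t-2}\right]_q\left(1+\theta_{t+2}q^{k-t-1}\frac{q^{n-k}-1}{q^{k-t-1}-1}\right),\] i.e. the set of all $k$-spaces of $\mathrm{PG}(n,q)$ in $\langle\pi,\delta\rangle$ together with all $k$-spaces through $\delta$ meeting $\langle\pi,\delta\rangle$ in at least a $(t+1)$-space (for a $t$-space $\delta$ and $k$-space $\pi$ with $\dim(\pi\cap\delta)=t-1$) is larger than the set of all $k$-spaces meeting a fixed $(t+2)$-space in at least a $(t+1)$-space.
   Context: $\left[{n\atop k}\right]_q=\frac{(q^n-1)\cdots(q^{n-k+1}-1)}{(q^k-1)\cdots(q-1)}$ for $k>0$, $=1$ for $k=0$; $\theta_m=\frac{q^{m+1}-1}{q-1}$; $q$ is a prime power; dimensions are projective. *)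

theory Defs
  imports Complex_Main "HOL-Computational_Algebra.Primes"
begin

definition gauss_binom :: "nat \<Rightarrow> nat \<Rightarrow> nat \<Rightarrow> real" where
  "gauss_binom q n k =
     (if k = 0 then 1
      else (\<Prod>i<k. real q ^ (n - i) - 1) / (\<Prod>i<k. real q ^ (i + 1) - 1))"

text \<open>theta_m = (q^(m+1) - 1)/(q - 1), number of points of PG(m,q).\<close>
definition theta :: "nat \<Rightarrow> nat \<Rightarrow> real" where
  "theta q m = (real q ^ (m + 1) - 1) / (real q - 1)"

definition prime_power :: "nat \<Rightarrow> bool" where
  "prime_power q \<longleftrightarrow> (\<exists>p e. prime p \<and> e \<ge> 1 \<and> q = p ^ e)"

end

(* With m = k - t and a = n - k, iterating the q-Pascal rule
   [N+1, j+1] = [N, j] + q^(j+1) [N, j+1] telescopes [m+a, m] - q^((m+1)m) [a-1, m] into the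
   sum of the nonnegative terms q^(jm) [m+a-j-1, m-1], j = 0..m, whose last two terms alone are
   at least (1 + q) q^((m-1)(a+1)).  On the other side, q^(j(N-j)) <= [N, j] <= 2 q^(j(N-j)) for
   q >= 3 and theta_(t+2) <= (3/2) q^(t+2) bound the right-hand side by
   2 q^((m-2)a) + (27/8) q^((m-1)(a+1)), which is smaller because q^(a+m-1) >= 9.
   The term theta_(k+1) - theta_(k-t) is nonnegative and is dropped. *)

theory Submission
  imports Defs
begin

lemma gauss_binom_eq_prod:
  "gauss_binom q n k = (\<Prod>i<k. real q ^ (n - i) - 1) / (\<Prod>i<k. real q ^ (i + 1) - 1)"
  by (simp add: gauss_binom_def)

lemma prod_lessThan_rev: "(\<Prod>i<k. f (k - i :: nat)) = (\<Prod>i<k. f (i + 1) :: 'a :: comm_monoid_mult)"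
proof -
  have "(\<Prod>i<k. f (k - i)) = (\<Prod>i<k. (\<lambda>j. f (j + 1)) (k - Suc i))"
    by (intro prod.cong refl arg_cong[where f = f]) auto
  also have "\<dots> = (\<Prod>i<k. f (i + 1))"
    by (rule prod.nat_diff_reindex)
  finally show ?thesis .
qed

lemma gauss_binom_denom_pos:
  assumes "q \<ge> 2"
  shows "0 < (\<Prod>i<k. real q ^ (i + 1) - 1)"
proof (rule prod_pos)
  fix i
  have "1 < real q ^ (i + 1)"
    using assms by (intro one_less_power) auto
  then show "0 < real q ^ (i + 1) - 1"
    by simp
qed

lemma gauss_binom_nonneg:
  assumes "q \<ge> 1"
  shows "0 \<le> gauss_binom q n k"
  using assms unfolding gauss_binom_eq_prod
  by (intro divide_nonneg_nonneg prod_nonneg) (simp_all add: one_le_power del: power_Suc)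

lemma gauss_binom_ge_power:
  assumes "q \<ge> 2" "k \<le> n"
  shows "real q ^ (k * (n - k)) \<le> gauss_binom q n k"
proof -
  let ?Q = "real q"
  have "(\<Prod>i<k. ?Q ^ (i + 1) - 1) = (\<Prod>i<k. ?Q ^ (k - i) - 1)"
    using prod_lessThan_rev[of "\<lambda>j. ?Q ^ j - 1" k] by simp
  moreover have "?Q ^ (k * (n - k)) = (?Q ^ (n - k)) ^ k"
    by (metis power_mult mult.commute)
  ultimately have "?Q ^ (k * (n - k)) * (\<Prod>i<k. ?Q ^ (i + 1) - 1)
      = (\<Prod>i<k. ?Q ^ (n - k) * (?Q ^ (k - i) - 1))"
    by (simp only: prod.distrib prod_constant card_lessThan)
  also have "\<dots> \<le> (\<Prod>i<k. ?Q ^ (n - i) - 1)"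
  proof (rule prod_mono)
    fix i assume "i \<in> {..<k}"
    then have "?Q ^ (n - i) = ?Q ^ (n - k) * ?Q ^ (k - i)"
      using assms by (simp flip: power_add)
    moreover have "1 \<le> ?Q ^ (n - k)" "1 \<le> ?Q ^ (k - i)"
      using assms by simp_all
    ultimately show "0 \<le> ?Q ^ (n - k) * (?Q ^ (k - i) - 1) \<and>
        ?Q ^ (n - k) * (?Q ^ (k - i) - 1) \<le> ?Q ^ (n - i) - 1"
      by (simp add: right_diff_distrib mult_le_cancel_left1)
  qed
  finally show ?thesis
    using gauss_binom_denom_pos[OF assms(1), of k] by (simp add: gauss_binom_eq_prod le_divide_eq)
qed

(* The extra factor x ^ k + 1 makes the bound inductive: the step reduces to
   2 x ^ k + 1 <= x ^ (k + 1). *)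
lemma power_plus_one_mult_prod_power_le:
  fixes x :: real
  assumes "x \<ge> 3"
  shows "(x ^ k + 1) * (\<Prod>i<k. x ^ (i + 1)) \<le> 2 * x ^ k * (\<Prod>i<k. x ^ (i + 1) - 1)"
proof (induction k)
  case 0
  then show ?case by simp
next
  case (Suc k)
  define u y where "u = x ^ k" and "y = x ^ Suc k"
  define S P where "S = (\<Prod>i<k. x ^ (i + 1))" and "P = (\<Prod>i<k. x ^ (i + 1) - 1)"
  have u: "1 \<le> u" and "0 \<le> P"
    using assms unfolding u_def P_def
    by (simp_all add: one_le_power prod_nonneg del: power_Suc)
  have "3 * u \<le> x * u"
    using assms u by (intro mult_right_mono) auto
  moreover have "y = x * u"
    by (simp add: u_def y_def)
  ultimately have y: "2 * u + 1 \<le> y"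
    using u by linarith
  have "(u + 1) * ((y + 1) * (S * y)) = (y + 1) * y * ((u + 1) * S)"
    by (simp add: algebra_simps)
  also have "\<dots> \<le> (y + 1) * y * (2 * u * P)"
    using Suc.IH u y by (intro mult_left_mono) (simp_all add: u_def S_def P_def)
  also have "\<dots> = 2 * y * P * ((y + 1) * u)"
    by (simp add: algebra_simps)
  also have "\<dots> \<le> 2 * y * P * ((y - 1) * (u + 1))"
    using \<open>0 \<le> P\<close> u y by (intro mult_left_mono) (simp_all add: algebra_simps)
  also have "\<dots> = (u + 1) * (2 * y * (P * (y - 1)))"
    by (simp add: algebra_simps)
  finally have "(y + 1) * (S * y) \<le> 2 * y * (P * (y - 1))"
    using u by (simp only: mult_le_cancel_left_pos)
  then show ?case
    by (simp add: u_def y_def S_def P_def)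
qed

lemma prod_power_le_twice_prod_power_minus_one:
  fixes x :: real
  assumes "x \<ge> 3"
  shows "(\<Prod>i<k. x ^ (i + 1)) \<le> 2 * (\<Prod>i<k. x ^ (i + 1) - 1)"
proof -
  have "x ^ k * (\<Prod>i<k. x ^ (i + 1)) \<le> (x ^ k + 1) * (\<Prod>i<k. x ^ (i + 1))"
    using assms by (intro mult_right_mono) (simp_all add: prod_nonneg)
  also have "\<dots> \<le> x ^ k * (2 * (\<Prod>i<k. x ^ (i + 1) - 1))"
    using power_plus_one_mult_prod_power_le[OF assms] by (simp only: ac_simps)
  finally show ?thesis
    using assms by simp
qed

lemma gauss_binom_le_twice_power:
  assumes "q \<ge> 3" "k \<le> n"
  shows "gauss_binom q n k \<le> 2 * real q ^ (k * (n - k))"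
proof -
  let ?Q = "real q"
  have "(\<Prod>i<k. ?Q ^ (n - i) - 1) \<le> (\<Prod>i<k. ?Q ^ (n - k) * ?Q ^ (k - i))"
  proof (rule prod_mono)
    fix i assume "i \<in> {..<k}"
    then have "?Q ^ (n - i) = ?Q ^ (n - k) * ?Q ^ (k - i)"
      using assms by (simp flip: power_add)
    moreover have "1 \<le> ?Q ^ (n - i)"
      using assms by simp
    ultimately show "0 \<le> ?Q ^ (n - i) - 1 \<and> ?Q ^ (n - i) - 1 \<le> ?Q ^ (n - k) * ?Q ^ (k - i)"
      by simp
  qed
  also have "\<dots> = ?Q ^ (k * (n - k)) * (\<Prod>i<k. ?Q ^ (i + 1))"
  proof -
    have "(\<Prod>i<k. ?Q ^ (k - i)) = (\<Prod>i<k. ?Q ^ (i + 1))"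
      using prod_lessThan_rev[of "\<lambda>j. ?Q ^ j" k] by simp
    moreover have "?Q ^ (k * (n - k)) = (?Q ^ (n - k)) ^ k"
      by (metis power_mult mult.commute)
    ultimately show ?thesis
      by (simp only: prod.distrib prod_constant card_lessThan)
  qed
  also have "\<dots> \<le> ?Q ^ (k * (n - k)) * (2 * (\<Prod>i<k. ?Q ^ (i + 1) - 1))"
    using assms by (intro mult_left_mono prod_power_le_twice_prod_power_minus_one) auto
  finally show ?thesis
    using gauss_binom_denom_pos[of q k] assms
    by (simp add: gauss_binom_eq_prod divide_le_eq mult_ac)
qed

lemma gauss_binom_eq_0:
  assumes "n < k"
  shows "gauss_binom q n k = 0"
proof -
  have "(\<Prod>i<k. real q ^ (n - i) - 1) = 0"
    using assms by (intro prod_zero bexI[of _ n]) auto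
  then show ?thesis
    by (simp add: gauss_binom_eq_prod)
qed

lemma gauss_binom_Suc_Suc:
  assumes "q \<ge> 2"
  shows "gauss_binom q (Suc n) (Suc k) = gauss_binom q n k + real q ^ Suc k * gauss_binom q n (Suc k)"
proof (cases "k \<le> n")
  case True
  let ?Q = "real q"
  define P D x y where "P = (\<Prod>i<k. ?Q ^ (n - i) - 1)" and "D = (\<Prod>i<k. ?Q ^ (i + 1) - 1)"
    and "x = ?Q ^ Suc k" and "y = ?Q ^ (n - k)"
  have "0 < D"
    unfolding D_def by (rule gauss_binom_denom_pos[OF assms])
  moreover have "1 < x"
    using assms one_less_power[of ?Q "Suc k"] by (simp add: x_def)
  moreover have "(\<Prod>i<Suc k. ?Q ^ (Suc n - i) - 1) = (?Q ^ Suc n - 1) * P"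
    by (simp only: prod.lessThan_Suc_shift) (simp add: P_def)
  moreover have "?Q ^ Suc n = x * y"
    using True by (simp add: x_def y_def flip: power_add)
  moreover have "(\<Prod>i<Suc k. ?Q ^ (n - i) - 1) = P * (y - 1)"
    by (simp add: P_def y_def)
  moreover have "(\<Prod>i<Suc k. ?Q ^ (i + 1) - 1) = D * (x - 1)"
    by (simp add: D_def x_def)
  ultimately show ?thesis
    unfolding gauss_binom_eq_prod P_def [symmetric] D_def [symmetric] x_def [symmetric]
    by (simp only:) (simp add: field_simps)
next
  case False
  then show ?thesis
    by (simp add: gauss_binom_eq_0)
qed

lemma gauss_binom_diff_eq_sum:
  assumes "q \<ge> 2" "1 \<le> m" "s \<le> N"
  shows "gauss_binom q N m - real q ^ (s * m) * gauss_binom q (N - s) m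
       = (\<Sum>j<s. real q ^ (j * m) * gauss_binom q (N - j - 1) (m - 1))"
  using assms(3)
proof (induction s)
  case 0
  then show ?case by simp
next
  case (Suc s)
  have "gauss_binom q (N - s) m
      = gauss_binom q (N - s - 1) (m - 1) + real q ^ m * gauss_binom q (N - Suc s) m"
    using gauss_binom_Suc_Suc[OF assms(1), of "N - s - 1" "m - 1"] assms(2) Suc.prems
    by (simp add: Suc_diff_Suc)
  moreover have "real q ^ (Suc s * m) = real q ^ (s * m) * real q ^ m"
    by (simp add: power_add)
  ultimately show ?case
    using Suc by (simp add: algebra_simps)
qed

lemma gauss_binom_diff_lower_bound:
  assumes "q \<ge> 2" "1 \<le> m" "m < a"
  shows "(1 + real q) * real q ^ ((m - 1) * a + (m - 1))
       \<le> gauss_binom q (m + a) m - real q ^ ((m + 1) * m) * gauss_binom q (a - 1) m"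
proof -
  let ?Q = "real q"
  define f where "f j = ?Q ^ (j * m) * gauss_binom q (m + a - j - 1) (m - 1)" for j
  obtain m' where m: "m = Suc m'"
    using assms(2) by (cases m) auto
  obtain d where a: "a = Suc (m + d)"
    using assms(3) less_imp_Suc_add by blast
  have f_pred_m: "f (m - 1) = ?Q ^ ((m - 1) * m) * gauss_binom q a (m - 1)"
    and f_m: "f m = ?Q ^ (m * m) * gauss_binom q (a - 1) (m - 1)"
    using m by (simp_all add: f_def)
  have "?Q ^ ((m - 1) * a + (m - 1)) = ?Q ^ ((m - 1) * m) * ?Q ^ ((m - 1) * (a - (m - 1)))"
    unfolding power_add [symmetric] using m a by (simp add: algebra_simps)
  also have "\<dots> \<le> f (m - 1)"
    unfolding f_pred_m using assms m a by (intro mult_left_mono gauss_binom_ge_power) auto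
  finally have low1: "?Q ^ ((m - 1) * a + (m - 1)) \<le> f (m - 1)" .
  have "?Q * ?Q ^ ((m - 1) * a + (m - 1)) = ?Q ^ (m * m) * ?Q ^ ((m - 1) * (a - 1 - (m - 1)))"
    unfolding power_Suc [symmetric] power_add [symmetric] using m a by (simp add: algebra_simps)
  also have "\<dots> \<le> f m"
    unfolding f_m using assms m a by (intro mult_left_mono gauss_binom_ge_power) auto
  finally have low2: "?Q * ?Q ^ ((m - 1) * a + (m - 1)) \<le> f m" .
  have "f (m - 1) + f m = sum f {m - 1, m}"
    using m by simp
  also have "\<dots> \<le> sum f {..<m + 1}"
    using assms by (intro sum_mono2) (auto simp: f_def intro!: mult_nonneg_nonneg gauss_binom_nonneg)
  also have "\<dots> = gauss_binom q (m + a) m - ?Q ^ ((m + 1) * m) * gauss_binom q (a - 1) m"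
    using gauss_binom_diff_eq_sum[OF assms(1,2), of "m + 1" "m + a"] assms(3)
    by (simp add: f_def)
  finally show ?thesis
    using low1 low2 by (simp add: algebra_simps)
qed

lemma theta_mono:
  assumes "q \<ge> 2" "i \<le> j"
  shows "theta q i \<le> theta q j"
  unfolding theta_def using assms by (intro divide_right_mono diff_right_mono power_increasing) auto

lemma theta_nonneg: "0 \<le> theta q i"
  unfolding theta_def
  by (cases "q = 0") (simp_all add: divide_nonneg_nonneg one_le_power del: power_Suc)

lemma theta_le_power:
  assumes "q \<ge> 3"
  shows "theta q i \<le> 3 / 2 * real q ^ i"
proof -
  have "3 * real q ^ i \<le> real q * real q ^ i"
    using assms by (intro mult_right_mono) auto
  then have "real q ^ (i + 1) - 1 \<le> 3 / 2 * real q ^ i * (real q - 1)"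
    by (simp add: algebra_simps)
  then show ?thesis
    using assms by (simp add: theta_def divide_le_eq)
qed

lemma mult_divide_diff_one_le:
  fixes y z :: real
  assumes "9 \<le> z" "1 \<le> y"
  shows "z * ((y - 1) / (z - 1)) \<le> 9 / 8 * y"
proof -
  have "y * 9 \<le> y * z"
    using assms by (intro mult_left_mono) auto
  then have "z * (y - 1) \<le> 9 / 8 * y * (z - 1)"
    using assms(1) by (simp add: algebra_simps)
  then show ?thesis
    using assms(1) by (simp add: divide_le_eq)
qed

lemma theta_mult_power_ratio_le:
  assumes "q \<ge> 3" "t + 3 \<le> m"
  shows "theta q (t + 2) * real q ^ (m - 1) * ((real q ^ a - 1) / (real q ^ (m - 1) - 1))
         \<le> 27 / 16 * real q ^ (a + (m - 1))"
proof -
  let ?Q = "real q"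
  define Y Z where "Y = ?Q ^ a" and "Z = ?Q ^ (m - 1)"
  have "1 \<le> Y"
    using assms by (simp add: Y_def)
  have "(3::real) ^ 2 \<le> ?Q ^ 2"
    using assms by (intro power_mono) auto
  also have "\<dots> \<le> Z"
    using assms unfolding Z_def by (intro power_increasing) auto
  finally have "9 \<le> Z"
    by simp
  have "theta q (t + 2) \<le> 3 / 2 * ?Q ^ (t + 2)"
    using assms(1) by (rule theta_le_power)
  also have "\<dots> \<le> 3 / 2 * Z"
    using assms unfolding Z_def by (intro mult_left_mono power_increasing) auto
  finally have "theta q (t + 2) * (Z * ((Y - 1) / (Z - 1))) \<le> 3 / 2 * Z * (9 / 8 * Y)"
    using \<open>9 \<le> Z\<close> \<open>1 \<le> Y\<close>
    by (intro mult_mono mult_divide_diff_one_le mult_nonneg_nonneg divide_nonneg_nonneg) auto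
  then show ?thesis
    by (simp add: Y_def Z_def power_add algebra_simps)
qed

lemma gauss_binom_theta_product_upper_bound:
  assumes "q \<ge> 3" "t + 3 \<le> m"
  shows "gauss_binom q (m + a - 2) (m - 2) *
           (1 + theta q (t + 2) * real q ^ (m - 1) * ((real q ^ a - 1) / (real q ^ (m - 1) - 1)))
         \<le> 2 * real q ^ ((m - 2) * a) * (1 + 27 / 16 * real q ^ (a + (m - 1)))"
proof (rule mult_mono)
  have "gauss_binom q (m + a - 2) (m - 2) \<le> 2 * real q ^ ((m - 2) * (m + a - 2 - (m - 2)))"
    using assms by (intro gauss_binom_le_twice_power) auto
  also have "m + a - 2 - (m - 2) = a"
    using assms by simp
  finally show "gauss_binom q (m + a - 2) (m - 2) \<le> 2 * real q ^ ((m - 2) * a)" .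
  have "1 < real q ^ (m - 1)" "1 \<le> real q ^ a"
    using assms by (auto intro: one_less_power)
  then show "0 \<le> 1 + theta q (t + 2) * real q ^ (m - 1) * ((real q ^ a - 1) / (real q ^ (m - 1) - 1))"
    by (intro add_nonneg_nonneg mult_nonneg_nonneg divide_nonneg_nonneg theta_nonneg) simp_all
qed (use theta_mult_power_ratio_le[OF assms, of a] assms in simp_all)

lemma gauss_binom_theta_product_less_power:
  assumes "q \<ge> 3" "t + 3 \<le> m"
  shows "gauss_binom q (m + a - 2) (m - 2) *
           (1 + theta q (t + 2) * real q ^ (m - 1) * ((real q ^ a - 1) / (real q ^ (m - 1) - 1)))
         < (1 + real q) * real q ^ ((m - 1) * a + (m - 1))"
proof -
  define E W where "E = real q ^ ((m - 2) * a)" and "W = real q ^ (a + (m - 1))"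
  have "m - 1 = Suc (m - 2)"
    using assms(2) by arith
  then have "(m - 2) * a + (a + (m - 1)) = (m - 1) * a + (m - 1)"
    by simp
  then have EW: "real q ^ ((m - 1) * a + (m - 1)) = E * W"
    by (simp only: E_def W_def flip: power_add)
  have "0 < E"
    using assms(1) by (simp add: E_def)
  have "(3::real) ^ 2 \<le> real q ^ 2"
    using assms(1) by (intro power_mono) auto
  also have "\<dots> \<le> W"
    using assms unfolding W_def by (intro power_increasing) auto
  finally have "9 * E \<le> E * W"
    using \<open>0 < E\<close> by (simp add: mult.commute)
  moreover have "4 * (E * W) \<le> (1 + real q) * (E * W)"
    using assms(1) \<open>0 < E\<close> \<open>9 * E \<le> E * W\<close> by (intro mult_right_mono) auto
  moreover have "2 * E * (1 + 27 / 16 * W) = 2 * E + 27 / 8 * (E * W)"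
    by (simp add: algebra_simps)
  ultimately show ?thesis
    using gauss_binom_theta_product_upper_bound[OF assms, of a] \<open>0 < E\<close>
    unfolding EW E_def [symmetric] W_def [symmetric] by linarith
qed

theorem mainTheorem15:
  fixes n k t q :: nat
  assumes "prime_power q" and "q \<ge> 3"
    and "n > 2 * k - t" and "k > 2 * t + 2"
  shows "theta q (k + 1) - theta q (k - t) + gauss_binom q (n - t) (k - t)
           - real q ^ ((k - t + 1) * (k - t)) * gauss_binom q (n - k - 1) (k - t)
         > gauss_binom q (n - t - 2) (k - t - 2) *
           (1 + theta q (t + 2) * real q ^ (k - t - 1) *
                ((real q ^ (n - k) - 1) / (real q ^ (k - t - 1) - 1)))"
proof -
  define m a where "m = k - t" and "a = n - k"
  have "t + 3 \<le> m" "m < a"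
    using assms(3,4) unfolding m_def a_def by linarith+
  then have idx: "n - t = m + a" "n - t - 2 = m + a - 2" "n - k - 1 = a - 1"
    unfolding m_def a_def by linarith+
  have "theta q m \<le> theta q (k + 1)"
    using assms(2) by (intro theta_mono) (auto simp: m_def)
  then show ?thesis
    using gauss_binom_diff_lower_bound[of q m a] gauss_binom_theta_product_less_power[of q t m a]
      assms(2) \<open>t + 3 \<le> m\<close> \<open>m < a\<close>
    unfolding idx m_def [symmetric] a_def [symmetric] by linarith
qed

end
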